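(* Let $F=F(a,b)$ be the free group on generators $a,b$. For every $n\ge 1$, $$[[a,_{2n}b],a]\equiv\Big[\prod_{i=0}^{n-1}\big[[a,_{2n-1-i}b],[a,_ib]\big]^{(-1)^i},\ b\Big]\mod\gamma_{2n+3}(F).$$
   Context: For group elements, $[x,y]=x^{-1}y^{-1}xy$; commutators are left-normalized, $[x_1,\dots,x_n]=[[x_1,\dots,x_{n-1}],x_n]$, and $[x,_0y]=x$, $[x,_{i+1}y]=[[x,_iy],y]$. $\gamma_k(F)$ is the lower central series: $\gamma_1(F)=F$, $\gamma_{k+1}(F)=[\gamma_k(F),F]$. *)

theory Defs
  imports "HOL-Algebra.Algebra"
begin

definition comm :: "('a, 'b) monoid_scheme \<Rightarrow> 'a \<Rightarrow> 'a \<Rightarrow> 'a" where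
  "comm G x y = inv\<^bsub>G\<^esub> x \<otimes>\<^bsub>G\<^esub> inv\<^bsub>G\<^esub> y \<otimes>\<^bsub>G\<^esub> x \<otimes>\<^bsub>G\<^esub> y"

primrec iter_comm :: "('a, 'b) monoid_scheme \<Rightarrow> 'a \<Rightarrow> 'a \<Rightarrow> nat \<Rightarrow> 'a" where
  "iter_comm G x y 0 = x"
| "iter_comm G x y (Suc i) = comm G (iter_comm G x y i) y"

text \<open>Lower central series: gamma_1 = G, gamma_(k+1) = [gamma_k, G]
  (subgroup generated by the commutators [x,y], x in gamma_k, y in G).
  gamma_0 is also set to G (irrelevant for the statement).\<close>
fun lcs :: "('a, 'b) monoid_scheme \<Rightarrow> nat \<Rightarrow> 'a set" where
  "lcs G 0 = carrier G"
| "lcs G (Suc 0) = carrier G"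
| "lcs G (Suc (Suc k)) =
     generate G {comm G x y | x y. x \<in> lcs G (Suc k) \<and> y \<in> carrier G}"

definition ordered_prod :: "('a, 'b) monoid_scheme \<Rightarrow> 'a list \<Rightarrow> 'a" where
  "ordered_prod G xs = foldr (\<lambda>x acc. x \<otimes>\<^bsub>G\<^esub> acc) xs \<one>\<^bsub>G\<^esub>"

definition cong_mod :: "('a, 'b) monoid_scheme \<Rightarrow> 'a set \<Rightarrow> 'a \<Rightarrow> 'a \<Rightarrow> bool" where
  "cong_mod G N x y \<longleftrightarrow> x \<otimes>\<^bsub>G\<^esub> inv\<^bsub>G\<^esub> y \<in> N"

text \<open>Letters are pairs (e, g): g = False is generator a, g = True is b;
  e = True means the inverse letter. Elements are freely reduced words.\<close>
type_synonym letter2 = "bool \<times> bool"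

definition inverse_letters :: "letter2 \<Rightarrow> letter2 \<Rightarrow> bool" where
  "inverse_letters x y \<longleftrightarrow> fst x \<noteq> fst y \<and> snd x = snd y"

definition reduced_word :: "letter2 list \<Rightarrow> bool" where
  "reduced_word w \<longleftrightarrow> (\<forall>i. Suc i < length w \<longrightarrow> \<not> inverse_letters (w ! i) (w ! Suc i))"

fun cons_red :: "letter2 \<Rightarrow> letter2 list \<Rightarrow> letter2 list" where
  "cons_red x [] = [x]"
| "cons_red x (y # ys) = (if inverse_letters x y then ys else x # y # ys)"

definition free_group2 :: "letter2 list monoid" where
  "free_group2 = \<lparr> carrier = {w. reduced_word w},
                   monoid.mult = (\<lambda>u v. foldr cons_red u v),
                   one = [] \<rparr>"

definition gen_a :: "letter2 list" where "gen_a = [(False, False)]"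
definition gen_b :: "letter2 list" where "gen_b = [(False, True)]"

end

theory Submission
  imports Defs
begin

text \<open>Write u_i = [a,_i b], which lies in gamma_(i+1), and D_i = [u_(2n-i), u_i], which lies
  in gamma_(2n+2) and is therefore central modulo gamma_(2n+3). Modulo gamma_(2n+3) the map
  x |-> [x,b] is multiplicative on gamma_(2n+1), and the derivation rule
  [[x,y],b] = [[x,b],y] [x,[y,b]] gives [[u_(2n-1-i), u_i], b] = D_i D_(i+1). Hence the
  alternating product telescopes: its commutator with b is D_0 D_n^(-1 or +1) = [u_(2n), a],
  since D_n = [u_n, u_n] = 1.\<close>

section \<open>The free group on two generators\<close>

lemma reduced_word_Cons_Cons:
  "reduced_word (x # y # ys) \<longleftrightarrow> \<not> inverse_letters x y \<and> reduced_word (y # ys)"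
  unfolding reduced_word_def by (auto simp: All_less_Suc2 less_Suc_eq_0_disj)

lemma reduced_word_Nil [simp]: "reduced_word []"
  and reduced_word_singleton [simp]: "reduced_word [x]"
  by (simp_all add: reduced_word_def)

lemma reduced_word_Cons:
  "reduced_word (x # ys) \<longleftrightarrow> (ys = [] \<or> \<not> inverse_letters x (hd ys)) \<and> reduced_word ys"
  by (cases ys) (simp_all add: reduced_word_Cons_Cons)

lemma reduced_word_cons_red: "reduced_word w \<Longrightarrow> reduced_word (cons_red x w)"
  by (cases w) (auto simp: reduced_word_Cons)

lemma reduced_word_foldr_cons_red: "reduced_word w \<Longrightarrow> reduced_word (foldr cons_red u w)"
  by (induction u) (auto simp: reduced_word_cons_red)

lemma cons_red_cancel:
  assumes "inverse_letters x y" "reduced_word z"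
  shows "cons_red x (cons_red y z) = z"
proof (cases z)
  case (Cons z1 zs)
  show ?thesis
  proof (cases "inverse_letters y z1")
    case True
    then have "x = z1"
      using assms(1) by (cases x; cases y; cases z1) (auto simp: inverse_letters_def)
    moreover have "zs = [] \<or> \<not> inverse_letters z1 (hd zs)"
      using assms(2) Cons by (simp add: reduced_word_Cons)
    ultimately show ?thesis using Cons True by (cases zs) auto
  qed (use Cons assms in auto)
qed (use assms in auto)

lemma foldr_cons_red_cons_red:
  assumes "reduced_word r" "reduced_word w"
  shows "foldr cons_red (cons_red x r) w = cons_red x (foldr cons_red r w)"
proof (cases r)
  case (Cons y ys)
  then have "reduced_word (foldr cons_red ys w)"
    using assms by (simp add: reduced_word_Cons reduced_word_foldr_cons_red)
  then show ?thesis using Cons cons_red_cancel by simp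
qed simp

lemma foldr_cons_red_assoc:
  assumes "reduced_word v" "reduced_word w"
  shows "foldr cons_red (foldr cons_red u v) w = foldr cons_red u (foldr cons_red v w)"
  by (induction u)
    (simp_all add: assms foldr_cons_red_cons_red reduced_word_foldr_cons_red)

lemma foldr_cons_red_inverse:
  "reduced_word w \<Longrightarrow> foldr cons_red (rev (map (\<lambda>(e, g). (\<not> e, g)) w)) w = []"
proof (induction w)
  case (Cons x w)
  then have "reduced_word w" by (simp add: reduced_word_Cons)
  with Cons.IH show ?case by (simp add: inverse_letters_def split: prod.split)
qed simp

lemma group_free_group2: "group free_group2"
proof (rule groupI)
  fix w assume "w \<in> carrier free_group2"
  then have w: "reduced_word w" by (simp add: free_group2_def)
  let ?w' = "foldr cons_red (rev (map (\<lambda>(e, g). (\<not> e, g)) w)) []"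
  have "foldr cons_red ?w' w = []"
    using foldr_cons_red_assoc[of "[]" w] foldr_cons_red_inverse[OF w] w by simp
  then show "\<exists>w'\<in>carrier free_group2. w' \<otimes>\<^bsub>free_group2\<^esub> w = \<one>\<^bsub>free_group2\<^esub>"
    by (intro bexI[of _ ?w']) (auto simp: free_group2_def reduced_word_foldr_cons_red)
qed (auto simp: free_group2_def reduced_word_foldr_cons_red foldr_cons_red_assoc)

lemma gen_a_carrier: "gen_a \<in> carrier free_group2"
  and gen_b_carrier: "gen_b \<in> carrier free_group2"
  by (auto simp: free_group2_def gen_a_def gen_b_def reduced_word_def)

section \<open>Identities in a group\<close>

context group
begin

lemma inv_mult_cancel_left [simp]: "x \<in> carrier G \<Longrightarrow> y \<in> carrier G \<Longrightarrow> inv x \<otimes> (x \<otimes> y) = y"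
  and mult_inv_cancel_left [simp]: "x \<in> carrier G \<Longrightarrow> y \<in> carrier G \<Longrightarrow> x \<otimes> (inv x \<otimes> y) = y"
  by (simp_all add: m_assoc[symmetric])

lemma comm_closed [simp]: "x \<in> carrier G \<Longrightarrow> y \<in> carrier G \<Longrightarrow> comm G x y \<in> carrier G"
  by (simp add: comm_def)

lemma iter_comm_closed [simp]:
  "x \<in> carrier G \<Longrightarrow> y \<in> carrier G \<Longrightarrow> iter_comm G x y i \<in> carrier G"
  by (induction i) simp_all

lemma inv_comm_swap: "x \<in> carrier G \<Longrightarrow> y \<in> carrier G \<Longrightarrow> inv (comm G x y) = comm G y x"
  by (simp add: comm_def m_assoc inv_mult_group)

lemma comm_eq_one_iff:
  "x \<in> carrier G \<Longrightarrow> y \<in> carrier G \<Longrightarrow> comm G x y = \<one> \<longleftrightarrow> x \<otimes> y = y \<otimes> x"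
proof -
  assume xy: "x \<in> carrier G" "y \<in> carrier G"
  then have "y \<otimes> x \<otimes> comm G x y = x \<otimes> y"
    by (simp add: comm_def m_assoc)
  with xy show ?thesis using l_cancel_one[of "y \<otimes> x" "comm G x y"] by auto
qed

lemma conj_eq_if_commute:
  "x \<in> carrier G \<Longrightarrow> g \<in> carrier G \<Longrightarrow> x \<otimes> g = g \<otimes> x \<Longrightarrow> inv g \<otimes> x \<otimes> g = x"
  by (simp add: m_assoc)

lemma comm_conj: "x \<in> carrier G \<Longrightarrow> y \<in> carrier G \<Longrightarrow> g \<in> carrier G \<Longrightarrow>
  g \<otimes> comm G x y \<otimes> inv g = comm G (g \<otimes> x \<otimes> inv g) (g \<otimes> y \<otimes> inv g)"
  by (simp add: comm_def m_assoc inv_mult_group)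

lemma comm_mult_left: "x \<in> carrier G \<Longrightarrow> y \<in> carrier G \<Longrightarrow> z \<in> carrier G \<Longrightarrow>
  comm G (x \<otimes> y) z = (inv y \<otimes> comm G x z \<otimes> y) \<otimes> comm G y z"
  by (simp add: comm_def m_assoc inv_mult_group)

lemma comm_mult_right: "x \<in> carrier G \<Longrightarrow> y \<in> carrier G \<Longrightarrow> z \<in> carrier G \<Longrightarrow>
  comm G x (y \<otimes> z) = comm G x z \<otimes> (inv z \<otimes> comm G x y \<otimes> z)"
  by (simp add: comm_def m_assoc inv_mult_group)

lemma comm_inv_left: "x \<in> carrier G \<Longrightarrow> y \<in> carrier G \<Longrightarrow>
  comm G (inv x) y = x \<otimes> inv (comm G x y) \<otimes> inv x"
  by (simp add: comm_def m_assoc inv_mult_group)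

lemma comm_inv_right: "x \<in> carrier G \<Longrightarrow> y \<in> carrier G \<Longrightarrow>
  comm G x (inv y) = y \<otimes> inv (comm G x y) \<otimes> inv y"
  by (simp add: comm_def m_assoc inv_mult_group)

lemma hall_witt:
  assumes "x \<in> carrier G" "y \<in> carrier G" "z \<in> carrier G"
  shows "(inv y \<otimes> comm G (comm G x (inv y)) z \<otimes> y) \<otimes> (inv z \<otimes> comm G (comm G y (inv z)) x \<otimes> z)
    \<otimes> (inv x \<otimes> comm G (comm G z (inv x)) y \<otimes> x) = \<one>"
  using assms by (simp add: comm_def m_assoc inv_mult_group)

lemma hall_witt_normal:
  assumes N: "N \<lhd> G" and x: "x \<in> carrier G" and y: "y \<in> carrier G" and z: "z \<in> carrier G"
    and "comm G (comm G y (inv z)) x \<in> N" "comm G (comm G z (inv x)) y \<in> N"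
  shows "comm G (comm G x (inv y)) z \<in> N"
proof -
  interpret N: normal N G by (rule N)
  let ?A = "comm G (comm G x (inv y)) z"
  let ?B = "inv z \<otimes> comm G (comm G y (inv z)) x \<otimes> z"
  let ?C = "inv x \<otimes> comm G (comm G z (inv x)) y \<otimes> x"
  have A: "?A \<in> carrier G" using x y z by simp
  have "inv (?B \<otimes> ?C) \<in> N"
    using N.m_inv_closed[OF N.m_closed[OF N.inv_op_closed1[OF z assms(5)] N.inv_op_closed1[OF x assms(6)]]] .
  moreover have "inv y \<otimes> ?A \<otimes> y = inv (?B \<otimes> ?C)"
    using hall_witt[OF x y z] x y z by (intro inv_equality[symmetric]) (simp_all add: m_assoc)
  ultimately have "y \<otimes> (inv y \<otimes> ?A \<otimes> y) \<otimes> inv y \<in> N"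
    using N.inv_op_closed2[OF y] by simp
  moreover have "y \<otimes> (inv y \<otimes> ?A \<otimes> y) \<otimes> inv y = ?A"
    using A y by (simp add: m_assoc)
  ultimately show ?thesis by simp
qed

lemma subgroup_comm_in_normal:
  assumes N: "N \<lhd> G" and x: "x \<in> carrier G"
  shows "subgroup {y \<in> carrier G. comm G x y \<in> N} G"
proof -
  interpret N: normal N G by (rule N)
  let ?T = "{y \<in> carrier G. comm G x y \<in> N}"
  show ?thesis
  proof (rule subgroupI)
    show "?T \<subseteq> carrier G" by blast
    show "?T \<noteq> {}" using x N.one_closed by (auto simp: comm_def intro!: exI[of _ \<one>])
    show "inv y \<in> ?T" if "y \<in> ?T" for y
    proof -
      from that have y: "y \<in> carrier G" "comm G x y \<in> N" by (simp_all only: mem_Collect_eq)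
      have "comm G x (inv y) \<in> N"
        unfolding comm_inv_right[OF x y(1)] by (rule N.inv_op_closed2[OF y(1) N.m_inv_closed[OF y(2)]])
      with y(1) show ?thesis by blast
    qed
    show "y \<otimes> z \<in> ?T" if "y \<in> ?T" "z \<in> ?T" for y z
    proof -
      from that have y: "y \<in> carrier G" "comm G x y \<in> N" and z: "z \<in> carrier G" "comm G x z \<in> N"
        by (simp_all only: mem_Collect_eq)
      have "comm G x (y \<otimes> z) \<in> N"
        unfolding comm_mult_right[OF x y(1) z(1)] by (rule N.m_closed[OF z(2) N.inv_op_closed1[OF z(1) y(2)]])
      with y(1) z(1) show ?thesis by blast
    qed
  qed
qed

lemma comm_inv_left_in_normal:
  assumes N: "N \<lhd> G" and x: "x \<in> carrier G" and y: "y \<in> carrier G" and xy: "comm G x y \<in> N"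
  shows "comm G (inv x) y \<in> N"
proof -
  interpret N: normal N G by (rule N)
  show ?thesis
    unfolding comm_inv_left[OF x y] by (rule N.inv_op_closed2[OF x N.m_inv_closed[OF xy]])
qed

end

lemma ordered_prod_Cons: "ordered_prod G (x # xs) = x \<otimes>\<^bsub>G\<^esub> ordered_prod G xs"
  by (simp add: ordered_prod_def)

lemma (in monoid) ordered_prod_closed: "set xs \<subseteq> carrier G \<Longrightarrow> ordered_prod G xs \<in> carrier G"
  by (induction xs) (simp_all add: ordered_prod_Cons ordered_prod_def[of G "[]"])

lemma (in monoid) ordered_prod_snoc:
  "set xs \<subseteq> carrier G \<Longrightarrow> x \<in> carrier G \<Longrightarrow> ordered_prod G (xs @ [x]) = ordered_prod G xs \<otimes> x"
  by (induction xs) (simp_all add: ordered_prod_Cons ordered_prod_def[of G "[]"] ordered_prod_closed m_assoc)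

lemma (in group) ordered_prod_alternating_telescope:
  assumes f: "\<And>i. f i \<in> carrier G" and commute: "\<And>i. i < k \<Longrightarrow> f i \<otimes> f (Suc i) = f (Suc i) \<otimes> f i"
  shows "ordered_prod G (map (\<lambda>i. if even i then f i \<otimes> f (Suc i) else inv (f i \<otimes> f (Suc i))) [0..<k])
    = f 0 \<otimes> (if even k then inv (f k) else f k)"
  using commute
proof (induction k)
  case 0
  then show ?case using f by (simp add: ordered_prod_def)
next
  case (Suc k)
  let ?x = "\<lambda>i. if even i then f i \<otimes> f (Suc i) else inv (f i \<otimes> f (Suc i))"
  have IH: "ordered_prod G (map ?x [0..<k]) = f 0 \<otimes> (if even k then inv (f k) else f k)"
    using Suc by simp
  have "ordered_prod G (map ?x [0..<Suc k]) = ordered_prod G (map ?x [0..<k] @ [?x k])"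
    by simp
  also have "\<dots> = ordered_prod G (map ?x [0..<k]) \<otimes> ?x k"
    by (rule ordered_prod_snoc) (use f in auto)
  also have "\<dots> = f 0 \<otimes> (if even (Suc k) then inv (f (Suc k)) else f (Suc k))"
  proof (cases "even k")
    case True
    then show ?thesis using f by (simp add: IH m_assoc)
  next
    case False
    have "f k \<otimes> f (Suc k) = f (Suc k) \<otimes> f k" using Suc.prems by simp
    then have "f k \<otimes> inv (f k \<otimes> f (Suc k)) = inv (f (Suc k))"
      using f by (simp add: inv_mult_group)
    then show ?thesis using False f by (simp add: IH m_assoc)
  qed
  finally show ?case .
qed

text \<open>Conjugating [u,v] by w gives [u [u,w], v [v,w]]; under the commutation hypotheses
  its expansion collapses to [u,[v,w]] [u,v] [[u,w],v].\<close>

lemma (in group) comm_comm_expand: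
  assumes u: "u \<in> carrier G" and v: "v \<in> carrier G" and w: "w \<in> carrier G"
    and central1: "\<And>g. g \<in> carrier G \<Longrightarrow> comm G u (comm G v w) \<otimes> g = g \<otimes> comm G u (comm G v w)"
    and central2: "\<And>g. g \<in> carrier G \<Longrightarrow> comm G (comm G u w) v \<otimes> g = g \<otimes> comm G (comm G u w) v"
    and "comm G u v \<otimes> comm G u w = comm G u w \<otimes> comm G u v"
    and "comm G u v \<otimes> comm G v w = comm G v w \<otimes> comm G u v"
    and "comm G u w \<otimes> comm G v w = comm G v w \<otimes> comm G u w"
  shows "comm G (comm G u v) w = comm G (comm G u w) v \<otimes> comm G u (comm G v w)"
proof -
  define u1 v1 C D1 D2 where "u1 = comm G u w" and "v1 = comm G v w" and "C = comm G u v"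
    and "D1 = comm G u v1" and "D2 = comm G u1 v"
  have carr: "u1 \<in> carrier G" "v1 \<in> carrier G" "C \<in> carrier G" "D1 \<in> carrier G" "D2 \<in> carrier G"
    using u v w by (simp_all add: u1_def v1_def C_def D1_def D2_def)
  have D1_central: "\<And>g. g \<in> carrier G \<Longrightarrow> D1 \<otimes> g = g \<otimes> D1"
    and D2_central: "\<And>g. g \<in> carrier G \<Longrightarrow> D2 \<otimes> g = g \<otimes> D2"
    using central1 central2 by (simp_all add: D1_def D2_def u1_def v1_def)
  have C_u1: "C \<otimes> u1 = u1 \<otimes> C" and C_v1: "C \<otimes> v1 = v1 \<otimes> C" and u1_v1: "u1 \<otimes> v1 = v1 \<otimes> u1"
    using assms(6-8) by (simp_all add: u1_def v1_def C_def)
  have "inv w \<otimes> C \<otimes> w = comm G (u \<otimes> u1) (v \<otimes> v1)"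
    using u v w by (simp add: u1_def v1_def C_def comm_def m_assoc inv_mult_group)
  also have "\<dots> = (inv u1 \<otimes> comm G u (v \<otimes> v1) \<otimes> u1) \<otimes> comm G u1 (v \<otimes> v1)"
    using u v carr by (simp add: comm_mult_left)
  also have "comm G u (v \<otimes> v1) = D1 \<otimes> C"
    using comm_mult_right[OF u v carr(2)] conj_eq_if_commute[OF carr(3,2) C_v1] by (simp add: C_def D1_def)
  also have "comm G u1 (v \<otimes> v1) = D2"
    using comm_mult_right[OF carr(1) v carr(2)] comm_eq_one_iff[OF carr(1,2)] u1_v1
      conj_eq_if_commute[OF carr(5,2) D2_central[OF carr(2)]] carr v
    by (simp add: D2_def u1_def)
  also have "inv u1 \<otimes> (D1 \<otimes> C) \<otimes> u1 = D1 \<otimes> C"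
  proof (rule conj_eq_if_commute)
    have "D1 \<otimes> C \<otimes> u1 = D1 \<otimes> (u1 \<otimes> C)" using carr C_u1 by (simp add: m_assoc)
    also have "\<dots> = u1 \<otimes> (D1 \<otimes> C)" using carr D1_central[OF carr(1)] by (simp add: m_assoc[symmetric])
    finally show "D1 \<otimes> C \<otimes> u1 = u1 \<otimes> (D1 \<otimes> C)" .
  qed (use carr in simp_all)
  finally have "inv w \<otimes> C \<otimes> w = D1 \<otimes> C \<otimes> D2" .
  then have "comm G C w = inv C \<otimes> (D1 \<otimes> C \<otimes> D2)"
    using carr w by (simp add: comm_def m_assoc)
  also have "\<dots> = D2 \<otimes> D1"
    using carr D1_central[OF carr(3)] D1_central[OF carr(5)] by (simp add: m_assoc)
  finally show ?thesis by (simp add: C_def D1_def D2_def u1_def v1_def)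
qed

section \<open>The lower central series\<close>

declare lcs.simps(3) [simp del]

context group
begin

lemma lcs_Suc:
  "1 \<le> k \<Longrightarrow> lcs G (Suc k) = generate G {comm G x y | x y. x \<in> lcs G k \<and> y \<in> carrier G}"
  by (cases k) (simp_all add: lcs.simps(3))

lemma lcs_normal: "lcs G k \<lhd> G"
proof (induction k)
  case 0
  then show ?case by (simp add: normal_inv_iff subgroup_self)
next
  case (Suc k)
  show ?case
  proof (cases "k = 0")
    case True
    then show ?thesis by (simp add: normal_inv_iff subgroup_self)
  next
    case False
    interpret N: normal "lcs G k" G by (rule Suc.IH)
    let ?S = "{comm G x y | x y. x \<in> lcs G k \<and> y \<in> carrier G}"
    have "generate G ?S \<lhd> G"
    proof (rule normal_generateI)
      show "?S \<subseteq> carrier G" using N.subset by auto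
    next
      fix c g assume "c \<in> ?S" and g: "g \<in> carrier G"
      then obtain x y where c: "c = comm G x y" and x: "x \<in> lcs G k" and y: "y \<in> carrier G"
        by blast
      have "g \<otimes> c \<otimes> inv g = comm G (g \<otimes> x \<otimes> inv g) (g \<otimes> y \<otimes> inv g)"
        using c comm_conj[OF _ y g] N.subset x by blast
      moreover have "g \<otimes> x \<otimes> inv g \<in> lcs G k" by (rule N.inv_op_closed2[OF g x])
      ultimately show "g \<otimes> c \<otimes> inv g \<in> ?S" using g y by blast
    qed
    with False show ?thesis by (simp add: lcs_Suc)
  qed
qed

lemma lcs_subset_carrier: "lcs G k \<subseteq> carrier G"
  using lcs_normal normal_imp_subgroup subgroup.subset by blast

lemma lcs_subgroup: "subgroup (lcs G k) G"
  using lcs_normal by (rule normal_imp_subgroup)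

lemma lcs_Suc_subset: "lcs G (Suc k) \<subseteq> lcs G k"
proof (induction k)
  case (Suc k)
  show ?case
  proof (cases "k = 0")
    case True
    then show ?thesis using lcs_subset_carrier[of 2] by (simp add: numeral_2_eq_2)
  next
    case False
    then have "{comm G x y | x y. x \<in> lcs G (Suc k) \<and> y \<in> carrier G}
        \<subseteq> {comm G x y | x y. x \<in> lcs G k \<and> y \<in> carrier G}"
      using Suc.IH by blast
    with False show ?thesis by (simp add: lcs_Suc mono_generate)
  qed
qed simp

lemma lcs_antimono: "i \<le> j \<Longrightarrow> lcs G j \<subseteq> lcs G i"
  by (induction j rule: dec_induct) (use lcs_Suc_subset in blast)+

lemma comm_in_lcs_Suc: "x \<in> lcs G k \<Longrightarrow> y \<in> carrier G \<Longrightarrow> comm G x y \<in> lcs G (Suc k)"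
  using lcs_subset_carrier by (cases "k = 0") (auto simp: lcs_Suc intro: generate.incl)

lemma lcs_comm:
  assumes "x \<in> lcs G i" "y \<in> lcs G j" "1 \<le> i" "1 \<le> j"
  shows "comm G x y \<in> lcs G (i + j)"
  using assms(4,1,2,3)
proof (induction j arbitrary: i x y rule: nat_induct_at_least)
  case base
  then show ?case using comm_in_lcs_Suc lcs_subset_carrier by auto
next
  case (Suc j)
  \<comment> \<open>the generators [w,g] of gamma_(j+1) are handled by the three subgroup lemma\<close>
  have x: "x \<in> carrier G" using Suc.prems(1) lcs_subset_carrier by blast
  interpret N: normal "lcs G (i + Suc j)" G by (rule lcs_normal)
  have "y \<in> {y \<in> carrier G. comm G x y \<in> lcs G (i + Suc j)}"
  proof (rule subsetD[OF generate_subgroup_incl])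
    show "y \<in> generate G {comm G w g | w g. w \<in> lcs G j \<and> g \<in> carrier G}"
      using Suc.prems(2) Suc.hyps by (simp add: lcs_Suc)
    show "subgroup {y \<in> carrier G. comm G x y \<in> lcs G (i + Suc j)} G"
      by (rule subgroup_comm_in_normal[OF lcs_normal x])
    show "{comm G w g | w g. w \<in> lcs G j \<and> g \<in> carrier G}
        \<subseteq> {y \<in> carrier G. comm G x y \<in> lcs G (i + Suc j)}"
    proof safe
      fix w g assume w: "w \<in> lcs G j" and g: "g \<in> carrier G"
      have wc: "w \<in> carrier G" using w lcs_subset_carrier by blast
      show "comm G w g \<in> carrier G" using wc g by simp
      have "comm G (inv x) (inv g) \<in> lcs G (Suc i)"
        using comm_in_lcs_Suc[OF subgroup.m_inv_closed[OF lcs_subgroup Suc.prems(1)]] g by simp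
      then have "comm G (inv g) (inv x) \<in> lcs G (Suc i)"
        using subgroup.m_inv_closed[OF lcs_subgroup] x g by (metis inv_closed inv_comm_swap)
      from Suc.IH[OF this w] have "comm G (comm G (inv g) (inv x)) w \<in> lcs G (i + Suc j)"
        by simp
      moreover have "comm G (comm G x (inv w)) (inv g) \<in> lcs G (i + Suc j)"
        using Suc.IH[OF Suc.prems(1) subgroup.m_inv_closed[OF lcs_subgroup w] Suc.prems(3)]
          comm_in_lcs_Suc g by simp
      ultimately have "comm G (comm G w g) x \<in> lcs G (i + Suc j)"
        using hall_witt_normal[OF lcs_normal wc inv_closed[OF g] x] g by simp
      then show "comm G x (comm G w g) \<in> lcs G (i + Suc j)"
        using N.m_inv_closed inv_comm_swap[OF _ x] wc g by fastforce
    qed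
  qed
  then show ?case by blast
qed

lemma iter_comm_in_lcs:
  "a \<in> carrier G \<Longrightarrow> b \<in> carrier G \<Longrightarrow> iter_comm G a b i \<in> lcs G (Suc i)"
  by (induction i) (simp_all add: comm_in_lcs_Suc)

lemma comm_iter_comm_in_lcs:
  assumes "a \<in> carrier G" "b \<in> carrier G"
  shows "comm G (iter_comm G a b i) (iter_comm G a b j) \<in> lcs G (i + j + 2)"
  using lcs_comm[OF iter_comm_in_lcs[OF assms] iter_comm_in_lcs[OF assms]] by simp

end

section \<open>Quotients by a term of the lower central series\<close>

lemma (in group_hom) hom_comm:
  "x \<in> carrier G \<Longrightarrow> y \<in> carrier G \<Longrightarrow> h (comm G x y) = comm H (h x) (h y)"
  by (simp add: comm_def)

text \<open>h stands for the projection onto G / gamma_(c+1); working with an abstract surjective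
  homomorphism keeps the calculations below free of cosets.\<close>

locale lcs_quotient = group_hom +
  fixes c :: nat
  assumes surj: "h ` carrier G = carrier H"
    and lcs_Suc_kernel: "lcs G (Suc c) \<subseteq> kernel G H h"
begin

lemma image_commute_if_comm_in_lcs:
  assumes "x \<in> carrier G" "y \<in> carrier G" "comm G x y \<in> lcs G (Suc c)"
  shows "h x \<otimes>\<^bsub>H\<^esub> h y = h y \<otimes>\<^bsub>H\<^esub> h x"
proof -
  have "comm H (h x) (h y) = \<one>\<^bsub>H\<^esub>"
    using assms lcs_Suc_kernel by (auto simp: kernel_def hom_comm[symmetric])
  with assms show ?thesis by (simp add: H.comm_eq_one_iff)
qed

lemma image_lcs_commute:
  assumes x: "x \<in> lcs G i" and y: "y \<in> lcs G j" and "1 \<le> i" "1 \<le> j" "Suc c \<le> i + j"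
  shows "h x \<otimes>\<^bsub>H\<^esub> h y = h y \<otimes>\<^bsub>H\<^esub> h x"
proof (rule image_commute_if_comm_in_lcs)
  show "x \<in> carrier G" "y \<in> carrier G" using x y G.lcs_subset_carrier by blast+
  show "comm G x y \<in> lcs G (Suc c)"
    using G.lcs_comm[OF assms(1-4)] G.lcs_antimono[OF assms(5)] by blast
qed

lemma image_lcs_central:
  assumes x: "x \<in> lcs G c" and z: "z \<in> carrier H"
  shows "h x \<otimes>\<^bsub>H\<^esub> z = z \<otimes>\<^bsub>H\<^esub> h x"
proof -
  obtain g where g: "g \<in> carrier G" and z_eq: "z = h g" using z surj by blast
  have "h x \<otimes>\<^bsub>H\<^esub> h g = h g \<otimes>\<^bsub>H\<^esub> h x"
  proof (rule image_commute_if_comm_in_lcs)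
    show "x \<in> carrier G" using x G.lcs_subset_carrier by blast
  qed (use g G.comm_in_lcs_Suc[OF x g] in simp_all)
  then show ?thesis by (simp add: z_eq)
qed

lemma comm_mult_left_image:
  assumes x: "x \<in> carrier G" and y: "y \<in> carrier G" and b: "b \<in> carrier G"
    and xb: "comm G x b \<in> lcs G c"
  shows "h (comm G (x \<otimes> y) b) = h (comm G x b) \<otimes>\<^bsub>H\<^esub> h (comm G y b)"
proof -
  have "inv\<^bsub>H\<^esub> (h y) \<otimes>\<^bsub>H\<^esub> h (comm G x b) \<otimes>\<^bsub>H\<^esub> h y = h (comm G x b)"
    using x y b by (intro H.conj_eq_if_commute image_lcs_central[OF xb]) simp_all
  then show ?thesis using G.comm_mult_left[OF x y b] x y b by simp
qed

lemma comm_inv_left_image: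
  assumes x: "x \<in> carrier G" and b: "b \<in> carrier G" and xb: "comm G x b \<in> lcs G c"
  shows "h (comm G (inv x) b) = inv\<^bsub>H\<^esub> (h (comm G x b))"
proof -
  let ?k = "h (comm G x b)"
  have k: "?k \<in> carrier H" and hx: "h x \<in> carrier H" using x b by simp_all
  have "inv\<^bsub>H\<^esub> (h x \<otimes>\<^bsub>H\<^esub> ?k) = inv\<^bsub>H\<^esub> (?k \<otimes>\<^bsub>H\<^esub> h x)"
    using image_lcs_central[OF xb hx] by simp
  then have "inv\<^bsub>H\<^esub> ?k \<otimes>\<^bsub>H\<^esub> inv\<^bsub>H\<^esub> (h x) = inv\<^bsub>H\<^esub> (h x) \<otimes>\<^bsub>H\<^esub> inv\<^bsub>H\<^esub> ?k"
    using k hx by (simp add: H.inv_mult_group)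
  from H.conj_eq_if_commute[OF _ _ this]
  have "h x \<otimes>\<^bsub>H\<^esub> inv\<^bsub>H\<^esub> ?k \<otimes>\<^bsub>H\<^esub> inv\<^bsub>H\<^esub> (h x) = inv\<^bsub>H\<^esub> ?k"
    using k hx by simp
  then show ?thesis using G.comm_inv_left[OF x b] x b by simp
qed

lemma comm_ordered_prod_image:
  assumes "set xs \<subseteq> carrier G" "b \<in> carrier G" "\<And>x. x \<in> set xs \<Longrightarrow> comm G x b \<in> lcs G c"
  shows "h (comm G (ordered_prod G xs) b) = ordered_prod H (map (\<lambda>x. h (comm G x b)) xs)"
  using assms
proof (induction xs)
  case Nil
  then show ?case by (simp add: ordered_prod_def comm_def)
next
  case (Cons x xs)
  then show ?case
    by (simp add: ordered_prod_Cons comm_mult_left_image G.ordered_prod_closed)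
qed

lemma comm_comm_image:
  assumes x: "x \<in> lcs G p" and y: "y \<in> lcs G q" and "1 \<le> p" "1 \<le> q" "c \<le> p + q + 1"
    and b: "b \<in> carrier G"
  shows "h (comm G (comm G x y) b) = h (comm G (comm G x b) y) \<otimes>\<^bsub>H\<^esub> h (comm G x (comm G y b))"
proof -
  have xc: "x \<in> carrier G" and yc: "y \<in> carrier G" using x y G.lcs_subset_carrier by blast+
  have xb: "comm G x b \<in> lcs G (Suc p)" and yb: "comm G y b \<in> lcs G (Suc q)"
    using G.comm_in_lcs_Suc x y b by blast+
  have xy: "comm G x y \<in> lcs G (p + q)" using G.lcs_comm assms by blast
  have x_yb: "comm G x (comm G y b) \<in> lcs G c" and xb_y: "comm G (comm G x b) y \<in> lcs G c"
    using G.lcs_comm[OF x yb] G.lcs_comm[OF xb y] G.lcs_antimono[of c "p + Suc q"] assms by auto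
  let ?x = "h x" and ?y = "h y" and ?b = "h b"
  have central1: "comm H ?x (comm H ?y ?b) \<otimes>\<^bsub>H\<^esub> z = z \<otimes>\<^bsub>H\<^esub> comm H ?x (comm H ?y ?b)"
    and central2: "comm H (comm H ?x ?b) ?y \<otimes>\<^bsub>H\<^esub> z = z \<otimes>\<^bsub>H\<^esub> comm H (comm H ?x ?b) ?y"
    if "z \<in> carrier H" for z
    using image_lcs_central[OF x_yb that] image_lcs_central[OF xb_y that] xc yc b
    by (simp_all add: hom_comm)
  have "h (comm G x y) \<otimes>\<^bsub>H\<^esub> h (comm G x b) = h (comm G x b) \<otimes>\<^bsub>H\<^esub> h (comm G x y)"
    by (rule image_lcs_commute[OF xy xb]) (use assms in auto)
  then have commute1: "comm H ?x ?y \<otimes>\<^bsub>H\<^esub> comm H ?x ?b = comm H ?x ?b \<otimes>\<^bsub>H\<^esub> comm H ?x ?y"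
    using xc yc b by (simp add: hom_comm)
  have "h (comm G x y) \<otimes>\<^bsub>H\<^esub> h (comm G y b) = h (comm G y b) \<otimes>\<^bsub>H\<^esub> h (comm G x y)"
    by (rule image_lcs_commute[OF xy yb]) (use assms in auto)
  then have commute2: "comm H ?x ?y \<otimes>\<^bsub>H\<^esub> comm H ?y ?b = comm H ?y ?b \<otimes>\<^bsub>H\<^esub> comm H ?x ?y"
    using xc yc b by (simp add: hom_comm)
  have "h (comm G x b) \<otimes>\<^bsub>H\<^esub> h (comm G y b) = h (comm G y b) \<otimes>\<^bsub>H\<^esub> h (comm G x b)"
    by (rule image_lcs_commute[OF xb yb]) (use assms in auto)
  then have commute3: "comm H ?x ?b \<otimes>\<^bsub>H\<^esub> comm H ?y ?b = comm H ?y ?b \<otimes>\<^bsub>H\<^esub> comm H ?x ?b"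
    using xc yc b by (simp add: hom_comm)
  have "comm H (comm H ?x ?y) ?b = comm H (comm H ?x ?b) ?y \<otimes>\<^bsub>H\<^esub> comm H ?x (comm H ?y ?b)"
    using H.comm_comm_expand[OF hom_closed[OF xc] hom_closed[OF yc] hom_closed[OF b] central1 central2 commute1 commute2 commute3] .
  with xc yc b show ?thesis by (simp add: hom_comm)
qed

lemma iter_comm_comm_image:
  assumes a: "a \<in> carrier G" and b: "b \<in> carrier G" and "c \<le> i + j + 3"
  shows "h (comm G (comm G (iter_comm G a b j) (iter_comm G a b i)) b)
    = h (comm G (iter_comm G a b (Suc j)) (iter_comm G a b i))
      \<otimes>\<^bsub>H\<^esub> h (comm G (iter_comm G a b j) (iter_comm G a b (Suc i)))"
  using comm_comm_image[OF G.iter_comm_in_lcs[OF a b] G.iter_comm_in_lcs[OF a b] _ _ _ b] assms(3)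
  by simp

lemma comm_iter_comm_image:
  assumes c: "c = 2 * n + 2" and a: "a \<in> carrier G" and b: "b \<in> carrier G"
  shows "h (comm G (iter_comm G a b (2 * n)) a)
    = h (comm G (ordered_prod G (map (\<lambda>i. let d = comm G (iter_comm G a b (2 * n - 1 - i)) (iter_comm G a b i)
                                          in if even i then d else inv d) [0..<n])) b)"
proof -
  let ?u = "iter_comm G a b"
  define D where "D i = h (comm G (?u (2 * n - i)) (?u i))" for i
  define e where "e = (\<lambda>i. let d = comm G (?u (2 * n - 1 - i)) (?u i) in if even i then d else inv d)"
  have D_carrier: "D i \<in> carrier H" for i using a b by (simp add: D_def)
  have D_central: "D i \<otimes>\<^bsub>H\<^esub> z = z \<otimes>\<^bsub>H\<^esub> D i" if "i \<le> 2 * n" "z \<in> carrier H" for i z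
    unfolding D_def using G.comm_iter_comm_in_lcs[OF a b, of "2 * n - i" i] that c
    by (intro image_lcs_central) simp_all
  have factor_lcs: "comm G (comm G (?u (2 * n - 1 - i)) (?u i)) b \<in> lcs G c" if "i < n" for i
    using G.comm_in_lcs_Suc[OF G.comm_iter_comm_in_lcs[OF a b, of "2 * n - 1 - i" i] b] that c by simp
  have e_carrier: "e i \<in> carrier G" for i using a b by (simp add: e_def Let_def)
  have e_lcs: "comm G (e i) b \<in> lcs G c" if "i < n" for i
    using factor_lcs[OF that] G.comm_inv_left_in_normal[OF G.lcs_normal _ b factor_lcs[OF that]] a b
    by (simp add: e_def Let_def)
  have e_image: "h (comm G (e i) b) = (if even i then D i \<otimes>\<^bsub>H\<^esub> D (Suc i) else inv\<^bsub>H\<^esub> (D i \<otimes>\<^bsub>H\<^esub> D (Suc i)))"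
    if "i < n" for i
  proof -
    have "Suc (2 * n - 1 - i) = 2 * n - i" "2 * n - 1 - i = 2 * n - Suc i" using that by auto
    then have "h (comm G (comm G (?u (2 * n - 1 - i)) (?u i)) b) = D i \<otimes>\<^bsub>H\<^esub> D (Suc i)"
      using iter_comm_comm_image[OF a b, of i "2 * n - 1 - i"] that c by (simp add: D_def)
    then show ?thesis using comm_inv_left_image[OF _ b factor_lcs[OF that]] a b by (simp add: e_def)
  qed
  have "h (comm G (ordered_prod G (map e [0..<n])) b) = ordered_prod H (map (\<lambda>x. h (comm G x b)) (map e [0..<n]))"
    using e_carrier e_lcs b by (intro comm_ordered_prod_image) auto
  also have "\<dots> = ordered_prod H (map (\<lambda>i. if even i then D i \<otimes>\<^bsub>H\<^esub> D (Suc i) else inv\<^bsub>H\<^esub> (D i \<otimes>\<^bsub>H\<^esub> D (Suc i))) [0..<n])"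
    unfolding map_map by (intro arg_cong[where f = "ordered_prod H"] map_cong) (simp_all add: e_image)
  also have "\<dots> = D 0 \<otimes>\<^bsub>H\<^esub> (if even n then inv\<^bsub>H\<^esub> (D n) else D n)"
    by (rule H.ordered_prod_alternating_telescope[OF D_carrier D_central]) (simp_all add: D_carrier)
  also have "\<dots> = D 0"
    using a b D_carrier[of 0] by (simp add: D_def comm_def G.m_assoc)
  finally show ?thesis by (simp add: D_def e_def)
qed

end

lemma (in normal) cong_mod_if_rcos_eq:
  assumes "x \<in> carrier G" "y \<in> carrier G" "H #> x = H #> y"
  shows "cong_mod G H x y"
  unfolding cong_mod_def
  using rcos_module_imp[OF is_group assms(2)] rcos_self[OF assms(1) subgroup_axioms] assms(3) by simp

lemma (in group) lcs_quotient_FactGroup: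
  "lcs_quotient G (G Mod lcs G (Suc c)) (\<lambda>x. lcs G (Suc c) #> x) c"
proof -
  interpret N: normal "lcs G (Suc c)" G by (rule lcs_normal)
  show ?thesis
  proof (intro lcs_quotient.intro lcs_quotient_axioms.intro)
    show "group_hom G (G Mod lcs G (Suc c)) (\<lambda>x. lcs G (Suc c) #> x)"
      using is_group N.factorgroup_is_group group_hom_axioms.intro[OF N.r_coset_hom_Mod]
      by (rule group_hom.intro)
    show "(\<lambda>x. lcs G (Suc c) #> x) ` carrier G = carrier (G Mod lcs G (Suc c))"
      by (auto simp: FactGroup_def RCOSETS_def)
    show "lcs G (Suc c) \<subseteq> kernel G (G Mod lcs G (Suc c)) (\<lambda>x. lcs G (Suc c) #> x)"
      using N.rcos_const[OF is_group] N.subset by (auto simp: kernel_def FactGroup_def)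
  qed
qed

theorem (in group) iter_comm_congruence:
  assumes a: "a \<in> carrier G" and b: "b \<in> carrier G"
  shows "cong_mod G (lcs G (2 * n + 3))
           (comm G (iter_comm G a b (2 * n)) a)
           (comm G (ordered_prod G (map (\<lambda>i. let c = comm G (iter_comm G a b (2 * n - 1 - i)) (iter_comm G a b i)
                                            in if even i then c else inv c) [0..<n])) b)"
proof -
  have N: "Suc (2 * n + 2) = 2 * n + 3" by simp
  interpret N: normal "lcs G (2 * n + 3)" G by (rule lcs_normal)
  interpret Q: lcs_quotient G "G Mod lcs G (2 * n + 3)" "\<lambda>x. lcs G (2 * n + 3) #> x" "2 * n + 2"
    using lcs_quotient_FactGroup[of "2 * n + 2"] by (simp only: N)
  have e_carrier: "set (map (\<lambda>i. let c = comm G (iter_comm G a b (2 * n - 1 - i)) (iter_comm G a b i)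
                                in if even i then c else inv c) [0..<n]) \<subseteq> carrier G"
    using a b by (auto simp: Let_def)
  show ?thesis
    using Q.comm_iter_comm_image[OF refl a b] a b e_carrier
    by (intro N.cong_mod_if_rcos_eq) (simp_all add: ordered_prod_closed)
qed

theorem corollary4p1:
  fixes n :: nat
  assumes "n \<ge> 1"
  shows "cong_mod free_group2 (lcs free_group2 (2 * n + 3))
           (comm free_group2 (iter_comm free_group2 gen_a gen_b (2 * n)) gen_a)
           (comm free_group2
              (ordered_prod free_group2
                 (map (\<lambda>i. let c = comm free_group2
                                    (iter_comm free_group2 gen_a gen_b (2 * n - 1 - i))
                                    (iter_comm free_group2 gen_a gen_b i)
                           in if even i then c else inv\<^bsub>free_group2\<^esub> c)
                    [0..<n]))
              gen_b)"
  using group.iter_comm_congruence[OF group_free_group2 gen_a_carrier gen_b_carrier] .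

end
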